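(* Let $a_n$ be the number of well-labelled Motzkin paths of size $n$ (with $a_0=a_1=0$) and $A(z)=\sum_{n\ge0}\frac{a_n}{n!}z^n$. Then $$A(z)=\frac{z^2}{2}+zA(z)+\frac{A(z)^2}{2}.$$
   Context: A well-labelled path of size $n$ is a pair $(\mathbf{p},\sigma)$ where $\mathbf{p}=p_1\ldots p_{n-1}$ is a word on $\{-1,0,+1\}$ and $\sigma$ is a permutation of $[n]$ such that $p_i=-1$ implies $\sigma_i<\sigma_{i+1}$ and $p_i=1$ implies $\sigma_i>\sigma_{i+1}$. It is Motzkin if $\sum_{i=1}^j p_i\ge0$ for all $j=1,\ldots,n-2$ and $\sum_{i=1}^{n-1}p_i=-1$. *)

theory Defs
  imports Complex_Main "HOL-Computational_Algebra.Formal_Power_Series"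
begin

text \<open>A well-labelled path of size n: a word p = p_1 ... p_{n-1} over {-1,0,1}
  (stored 0-based as a list of length n-1) and a permutation sigma of [n]
  (stored as the list sigma_1 ... sigma_n, i.e. a distinct list with element set {1..n}).\<close>
definition well_labelled_path :: "nat \<Rightarrow> int list \<Rightarrow> nat list \<Rightarrow> bool" where
  "well_labelled_path n p \<sigma> \<longleftrightarrow>
     length p = n - 1 \<and> set p \<subseteq> {-1, 0, 1} \<and>
     length \<sigma> = n \<and> distinct \<sigma> \<and> set \<sigma> = {1..n} \<and>
     (\<forall>i < n - 1. p ! i = -1 \<longrightarrow> \<sigma> ! i < \<sigma> ! (i + 1)) \<and>
     (\<forall>i < n - 1. p ! i = 1 \<longrightarrow> \<sigma> ! i > \<sigma> ! (i + 1))"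

definition motzkin_word :: "nat \<Rightarrow> int list \<Rightarrow> bool" where
  "motzkin_word n p \<longleftrightarrow>
     (\<forall>j \<in> {1..n-2}. sum_list (take j p) \<ge> 0) \<and> sum_list p = -1"

definition wl_motzkin_path :: "nat \<Rightarrow> int list \<Rightarrow> nat list \<Rightarrow> bool" where
  "wl_motzkin_path n p \<sigma> \<longleftrightarrow> well_labelled_path n p \<sigma> \<and> motzkin_word n p"

text \<open>a_n; with the convention a_0 = a_1 = 0 (which the definition also yields automatically).\<close>
definition num_wl_motzkin :: "nat \<Rightarrow> nat" where
  "num_wl_motzkin n = (if n < 2 then 0 else card {(p, \<sigma>). wl_motzkin_path n p \<sigma>})"

definition A_egf :: "real fps" where
  "A_egf = Abs_fps (\<lambda>n. real (num_wl_motzkin n) / fact n)"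

end

(*
  Only the relative order of the labels matters, so we count well-labelled Motzkin paths with
  labels from an arbitrary finite set L; their number depends only on |L|. For |L| = n >= 3 a
  path starts with a level step or an up step. Deleting a leading level step together with its
  first label leaves a path on the remaining n - 1 labels, giving n a_(n-1) paths. A path
  starting with an up step splits at its first return to height 0 into two Motzkin paths, the
  first one read backwards, whose label sets partition L; of the two ways of ordering such a pair
  exactly one makes the down step at the junction a descent. Hence
  2 a_n = 2 n a_(n-1) + sum_k C(n,k) a_k a_(n-k), which together with a_2 = 1 is the
  coefficient form of A = z^2/2 + z A + A^2/2.
*)
theory Submission
  imports Defs
begin

unbundle fps_syntax

section \<open>Lattice walks\<close>

fun nonneg_walk :: "int \<Rightarrow> int list \<Rightarrow> bool" where
  "nonneg_walk h [] \<longleftrightarrow> True"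
| "nonneg_walk h (c # p) \<longleftrightarrow> 0 \<le> h + c \<and> nonneg_walk (h + c) p"

definition excursion :: "int list \<Rightarrow> bool" where
  "excursion p \<longleftrightarrow> nonneg_walk 0 p \<and> sum_list p = 0"

definition reverse_walk :: "int list \<Rightarrow> int list" where
  "reverse_walk p = rev (map uminus p)"

lemma nonneg_walk_append [simp]:
  "nonneg_walk h (p @ q) \<longleftrightarrow> nonneg_walk h p \<and> nonneg_walk (h + sum_list p) q"
  by (induction p arbitrary: h) (auto simp: add.assoc)

lemma nonneg_walk_mono: "nonneg_walk h p \<Longrightarrow> h \<le> k \<Longrightarrow> nonneg_walk k p"
  by (induction p arbitrary: h k) auto

lemma nonneg_walk_iff_prefix_sums:
  "nonneg_walk h p \<longleftrightarrow> (\<forall>j\<in>{1..length p}. 0 \<le> h + sum_list (take j p))"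
  unfolding image_Suc_lessThan[symmetric]
  by (induction p arbitrary: h) (simp_all add: lessThan_Suc_eq_insert_0 add.assoc)

lemma nonneg_walk_end: "nonneg_walk h p \<Longrightarrow> 0 \<le> h \<Longrightarrow> 0 \<le> h + sum_list p"
proof (induction p arbitrary: h)
  case (Cons c p)
  then show ?case using Cons.IH[of "h + c"] by (simp add: add.assoc)
qed simp

lemma reverse_walk_simps [simp]:
  "reverse_walk [] = []"
  "reverse_walk (c # p) = reverse_walk p @ [- c]"
  "reverse_walk (p @ q) = reverse_walk q @ reverse_walk p"
  "reverse_walk (reverse_walk p) = p"
  "length (reverse_walk p) = length p"
  "sum_list (reverse_walk p) = - sum_list p"
  by (simp_all add: reverse_walk_def rev_map) (induction p; simp)

lemma nonneg_walk_reverse: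
  "nonneg_walk h p \<Longrightarrow> 0 \<le> h \<Longrightarrow> nonneg_walk (h + sum_list p) (reverse_walk p)"
proof (induction p arbitrary: h)
  case (Cons c p)
  then have "nonneg_walk (h + c + sum_list p) (reverse_walk p)" by simp
  with Cons.prems show ?case by (simp add: algebra_simps)
qed simp

lemma excursion_reverse_walk [simp]: "excursion (reverse_walk p) \<longleftrightarrow> excursion p"
proof -
  have "excursion (reverse_walk q)" if "excursion q" for q
    using that nonneg_walk_reverse[of 0 q] by (simp add: excursion_def)
  from this[of p] this[of "reverse_walk p"] show ?thesis by auto
qed

lemma nonneg_walk_first_return:
  assumes "\<forall>c\<in>set p. -1 \<le> c" "h + sum_list p < 0" "0 \<le> h"
  shows "\<exists>q r. p = q @ (-1) # r \<and> nonneg_walk h q \<and> h + sum_list q = 0"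
  using assms
proof (induction p arbitrary: h)
  case (Cons c p)
  show ?case
  proof (cases "h + c < 0")
    case True
    with Cons.prems have "h = 0" "c = -1" by auto
    then show ?thesis by (intro exI[of _ "[]"] exI[of _ p]) simp
  next
    case False
    with Cons.prems Cons.IH[of "h + c"] obtain q r
      where "p = q @ (-1) # r" "nonneg_walk (h + c) q" "h + c + sum_list q = 0"
      by (auto simp: add.assoc)
    with False show ?thesis by (intro exI[of _ "c # q"] exI[of _ r]) (auto simp: add.assoc)
  qed
qed simp

lemma excursion_first_return_unique:
  assumes "excursion q" "excursion q'" "q @ (-1) # r = q' @ (-1) # r'"
  shows "q = q' \<and> r = r'"
  using assms
  by (auto simp: append_eq_append_conv2 Cons_eq_append_conv append_eq_Cons_conv excursion_def)

lemma excursion_Cons_zero [simp]: "excursion (0 # p) \<longleftrightarrow> excursion p"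
  by (simp add: excursion_def)

lemma excursion_arch: "excursion q \<Longrightarrow> excursion r \<Longrightarrow> excursion (1 # q @ (-1) # r)"
  using nonneg_walk_mono[of 0 q 1] by (auto simp: excursion_def)

lemma excursion_arch_decompose:
  assumes "excursion (1 # p)" "\<forall>c\<in>set p. -1 \<le> c"
  obtains q r where "p = q @ (-1) # r" "excursion q" "excursion r"
proof -
  have walk: "nonneg_walk 1 p" and sum: "sum_list p = -1"
    using assms(1) by (simp_all add: excursion_def)
  then obtain q r where qr: "p = q @ (-1) # r" "nonneg_walk 0 q" "sum_list q = 0"
    using nonneg_walk_first_return[OF assms(2), of 0] by auto
  moreover have "excursion r"
    using walk sum qr by (simp add: excursion_def)
  ultimately show ?thesis using that by (simp add: excursion_def)
qed

section \<open>Labelling a walk\<close>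

definition labelled_step :: "int \<Rightarrow> nat \<Rightarrow> nat \<Rightarrow> bool" where
  "labelled_step c x y \<longleftrightarrow> c \<in> {-1, 0, 1} \<and> (c = -1 \<longrightarrow> x < y) \<and> (c = 1 \<longrightarrow> y < x)"

fun well_labelled :: "int list \<Rightarrow> nat list \<Rightarrow> bool" where
  "well_labelled [] [x] \<longleftrightarrow> True"
| "well_labelled (c # p) (x # y # s) \<longleftrightarrow> labelled_step c x y \<and> well_labelled p (y # s)"
| "well_labelled _ _ \<longleftrightarrow> False"

lemma labelled_step_uminus [simp]: "labelled_step (- c) y x \<longleftrightarrow> labelled_step c x y"
  by (auto simp: labelled_step_def)

lemma well_labelled_length: "well_labelled p s \<Longrightarrow> length s = Suc (length p)"
  by (induction p s rule: well_labelled.induct) auto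

lemma well_labelled_steps: "well_labelled p s \<Longrightarrow> set p \<subseteq> {-1, 0, 1}"
  by (induction p s rule: well_labelled.induct) (auto simp: labelled_step_def)

lemma well_labelled_Nil_iff: "well_labelled [] s \<longleftrightarrow> (\<exists>x. s = [x])"
  by (auto elim: well_labelled.elims)

lemma well_labelled_Cons_iff:
  "well_labelled (c # p) s \<longleftrightarrow>
     (\<exists>x y t. s = x # y # t \<and> labelled_step c x y \<and> well_labelled p (y # t))"
  by (cases "(c # p, s)" rule: well_labelled.cases) auto

lemma well_labelled_append_iff:
  assumes "length s = Suc (length p)"
  shows "well_labelled (p @ c # q) (s @ t) \<longleftrightarrow>
    well_labelled p s \<and> well_labelled q t \<and> labelled_step c (last s) (hd t)"
  using assms
proof (induction p arbitrary: s)
  case Nil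
  then obtain x where "s = [x]" by (auto simp: length_Suc_conv)
  then show ?case by (cases t) auto
next
  case (Cons c' p)
  then obtain x y s' where "s = x # y # s'"
    by (auto simp: length_Suc_conv)
  with Cons.prems Cons.IH[of "y # s'"] show ?case by auto
qed

lemma well_labelled_reverse:
  "well_labelled p s \<Longrightarrow> well_labelled (reverse_walk p) (rev s)"
proof (induction p s rule: well_labelled.induct)
  case (2 c p x y s)
  then have "well_labelled (reverse_walk p) (rev s @ [y])"
    and "length (rev s @ [y]) = Suc (length (reverse_walk p))"
    using well_labelled_length[of p "y # s"] by auto
  then show ?case
    using 2 well_labelled_append_iff[of "rev s @ [y]" "reverse_walk p" "- c" "[]" "[x]"] by simp
qed auto

lemma well_labelled_map:
  assumes "strict_mono_on A f" "set s \<subseteq> A"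
  shows "well_labelled p (map f s) \<longleftrightarrow> well_labelled p s"
  using assms(2)
proof (induction p s rule: well_labelled.induct)
  case (2 c p x y s)
  then show ?case
    by (simp add: labelled_step_def strict_mono_on_less[OF assms(1)])
qed auto

lemma well_labelled_iff_nth:
  "well_labelled p s \<longleftrightarrow> length s = Suc (length p) \<and>
     (\<forall>i<length p. labelled_step (p ! i) (s ! i) (s ! Suc i))"
proof (induction p arbitrary: s)
  case Nil
  then show ?case by (auto simp: well_labelled_Nil_iff length_Suc_conv)
next
  case (Cons c p)
  show ?case
  proof (cases "length s = Suc (Suc (length p))")
    case True
    then obtain x y t where "s = x # y # t" by (auto simp: length_Suc_conv)
    then show ?thesis by (auto simp: Cons.IH All_less_Suc2)
  next
    case False
    then show ?thesis using well_labelled_length by auto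
  qed
qed

section \<open>Well-labelled Motzkin paths over a finite label set\<close>

definition wl_motzkin :: "nat set \<Rightarrow> (int list \<times> nat list) set" where
  "wl_motzkin L = {(p, s). (\<exists>q. p = q @ [-1] \<and> excursion q) \<and>
     well_labelled p s \<and> distinct s \<and> set s = L}"

lemma motzkin_word_iff_excursion:
  assumes "set p \<subseteq> {-1, 0, 1}"
  shows "motzkin_word (Suc (length p)) p \<longleftrightarrow> (\<exists>q. p = q @ [-1] \<and> excursion q)"
proof (cases p rule: rev_cases)
  case (snoc q c)
  have "motzkin_word (Suc (length p)) p \<longleftrightarrow> nonneg_walk 0 q \<and> sum_list q + c = -1"
    unfolding motzkin_word_def nonneg_walk_iff_prefix_sums using snoc by auto
  moreover have "nonneg_walk 0 q \<Longrightarrow> 0 \<le> sum_list q"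
    using nonneg_walk_end[of 0 q] by simp
  moreover have "-1 \<le> c" using assms snoc by auto
  ultimately show ?thesis using snoc by (auto simp: excursion_def)
qed (simp add: motzkin_word_def)

lemma well_labelled_path_iff:
  "well_labelled_path (Suc (length p)) p s \<longleftrightarrow>
     well_labelled p s \<and> distinct s \<and> set s = {1..Suc (length p)}"
  unfolding well_labelled_path_def well_labelled_iff_nth labelled_step_def
  by (auto simp: subset_iff in_set_conv_nth)

lemma wl_motzkin_path_iff: "wl_motzkin_path n p s \<longleftrightarrow> (p, s) \<in> wl_motzkin {1..n}"
proof -
  have "n = Suc (length p)" if "wl_motzkin_path n p s"
  proof -
    from that have "p \<noteq> []" "length p = n - 1"
      by (auto simp: wl_motzkin_path_def motzkin_word_def well_labelled_path_def)
    then show ?thesis by (cases n) auto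
  qed
  moreover have "n = Suc (length p)" if "(p, s) \<in> wl_motzkin {1..n}"
    using that well_labelled_length[of p s] distinct_card[of s] by (auto simp: wl_motzkin_def)
  moreover have "wl_motzkin_path (Suc (length p)) p s \<longleftrightarrow> (p, s) \<in> wl_motzkin {1..Suc (length p)}"
    using motzkin_word_iff_excursion[of p] well_labelled_steps[of p s]
    by (auto simp: wl_motzkin_path_def wl_motzkin_def well_labelled_path_iff)
  ultimately show ?thesis by blast
qed

lemma wl_motzkin_card_labels:
  "(p, s) \<in> wl_motzkin L \<Longrightarrow> card L = Suc (length p) \<and> 2 \<le> card L"
  by (auto simp: wl_motzkin_def distinct_card dest!: well_labelled_length)

lemma num_wl_motzkin_eq_card: "num_wl_motzkin n = card (wl_motzkin {1..n})"
proof (cases "n < 2")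
  case True
  have "wl_motzkin {1..n} = {}"
  proof (rule equals0I)
    fix x assume "x \<in> wl_motzkin {1..n}"
    then show False using True wl_motzkin_card_labels[of "fst x" "snd x" "{1..n}"] by simp
  qed
  with True show ?thesis by (simp add: num_wl_motzkin_def)
next
  case False
  have "{(p, s). wl_motzkin_path n p s} = wl_motzkin {1..n}"
    using wl_motzkin_path_iff by auto
  with False show ?thesis by (simp add: num_wl_motzkin_def)
qed

lemma finite_wl_motzkin:
  assumes "finite L"
  shows "finite (wl_motzkin L)"
proof (rule finite_subset)
  show "wl_motzkin L \<subseteq> {p. set p \<subseteq> {-1, 0, 1} \<and> length p = card L - 1} \<times>
      {s. set s \<subseteq> L \<and> length s = card L}"
  proof clarify
    fix p s assume "(p, s) \<in> wl_motzkin L"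
    then show "p \<in> {p. set p \<subseteq> {-1, 0, 1} \<and> length p = card L - 1} \<and>
        s \<in> {s. set s \<subseteq> L \<and> length s = card L}"
      using wl_motzkin_card_labels[of p s L] well_labelled_steps[of p s]
      by (auto simp: wl_motzkin_def distinct_card)
  qed
  show "finite ({p. set p \<subseteq> {-1, 0, 1::int} \<and> length p = card L - 1} \<times>
      {s. set s \<subseteq> L \<and> length s = card L})"
    using assms by (intro finite_cartesian_product finite_lists_length_eq) auto
qed

lemma map_mem_wl_motzkin_iff:
  assumes "strict_mono_on A f" "set s \<subseteq> A"
  shows "(p, map f s) \<in> wl_motzkin (f ` A) \<longleftrightarrow> (p, s) \<in> wl_motzkin A"
proof -
  have inj: "inj_on f A" using assms(1) by (rule strict_mono_on_imp_inj_on)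
  then have "distinct (map f s) \<longleftrightarrow> distinct s" "f ` set s = f ` A \<longleftrightarrow> set s = A"
    using assms(2) by (auto simp: distinct_map inj_on_subset inj_on_image_eq_iff)
  then show ?thesis
    using well_labelled_map[OF assms] by (simp add: wl_motzkin_def)
qed

lemma card_wl_motzkin_strict_mono_image:
  assumes mono: "strict_mono_on A f"
  shows "card (wl_motzkin (f ` A)) = card (wl_motzkin A)"
proof -
  have inj: "inj_on f A" using mono by (rule strict_mono_on_imp_inj_on)
  let ?g = "inv_into A f"
  have labels: "set s = A" if "(p, s) \<in> wl_motzkin A" for p s A
    using that by (simp add: wl_motzkin_def)
  have left_inverse: "map ?g (map f s) = s" if "set s = A" for s
    unfolding map_map by (rule map_idI) (use that inj in auto)
  have right_inverse: "map f (map ?g t) = t" if "set t = f ` A" for t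
    unfolding map_map by (rule map_idI) (use that in \<open>auto simp: f_inv_into_f\<close>)
  have "bij_betw (\<lambda>(p, s). (p, map f s)) (wl_motzkin A) (wl_motzkin (f ` A))"
  proof (rule bij_betw_byWitness[where f' = "\<lambda>(p, t). (p, map ?g t)"], goal_cases)
    case 1
    show ?case using left_inverse labels by auto
  next
    case 2
    show ?case using right_inverse labels by auto
  next
    case 3
    show ?case using map_mem_wl_motzkin_iff[OF mono] labels by auto
  next
    case 4
    have "(p, map ?g t) \<in> wl_motzkin A" if "(p, t) \<in> wl_motzkin (f ` A)" for p t
    proof -
      have "set (map ?g t) \<subseteq> A" using labels[OF that] by (auto intro: inv_into_into)
      then show ?thesis
        using map_mem_wl_motzkin_iff[OF mono, of "map ?g t" p] that
          right_inverse[OF labels[OF that]] by simp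
    qed
    then show ?case by auto
  qed
  from bij_betw_same_card[OF this] show ?thesis ..
qed

lemma card_wl_motzkin: "finite L \<Longrightarrow> card (wl_motzkin L) = num_wl_motzkin (card L)"
proof -
  assume "finite L"
  define xs where "xs = sorted_list_of_set L"
  have xs: "set xs = L" "length xs = card L"
    using \<open>finite L\<close> by (simp_all add: xs_def)
  then have "L = (!) xs ` {..<card L}"
    by (auto simp: in_set_conv_nth)
  moreover have "strict_mono_on {..<card L} ((!) xs)"
    using xs by (auto intro!: strict_mono_onI simp: xs_def sorted_wrt_nth_less)
  moreover have "strict_mono_on {..<card L} Suc"
    by (rule strict_mono_onI) simp
  ultimately have "card (wl_motzkin L) = card (wl_motzkin (Suc ` {..<card L}))"
    using card_wl_motzkin_strict_mono_image by metis
  then show ?thesis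
    by (simp add: image_Suc_lessThan num_wl_motzkin_eq_card)
qed

section \<open>First-step decomposition\<close>

definition wl_motzkin_level :: "nat set \<Rightarrow> (int list \<times> nat list) set" where
  "wl_motzkin_level L = {x \<in> wl_motzkin L. hd (fst x) = 0}"

definition wl_motzkin_rise :: "nat set \<Rightarrow> (int list \<times> nat list) set" where
  "wl_motzkin_rise L = {x \<in> wl_motzkin L. hd (fst x) = 1}"

lemma wl_motzkin_eq_level_Un_rise:
  assumes "3 \<le> card L"
  shows "wl_motzkin L = wl_motzkin_level L \<union> wl_motzkin_rise L"
proof -
  have "hd p = 0 \<or> hd p = 1" if mem: "(p, s) \<in> wl_motzkin L" for p s
  proof -
    obtain q where q: "p = q @ [-1]" "excursion q"
      using mem by (auto simp: wl_motzkin_def)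
    have wl: "well_labelled p s"
      using mem by (simp add: wl_motzkin_def)
    have "q \<noteq> []"
      using q wl_motzkin_card_labels[OF mem] assms by auto
    then obtain c q' where c: "q = c # q'"
      by (cases q) auto
    then have "c \<in> {-1, 0, 1}" "0 \<le> c"
      using well_labelled_steps[OF wl] q by (auto simp: excursion_def)
    with q c show ?thesis by auto
  qed
  then show ?thesis by (fastforce simp: wl_motzkin_level_def wl_motzkin_rise_def)
qed

lemma wl_motzkin_level_eq:
  "wl_motzkin_level L = (\<lambda>(x, (p, s)). (0 # p, x # s)) ` (SIGMA x:L. wl_motzkin (L - {x}))"
proof (intro equalityI subsetI)
  fix z assume "z \<in> wl_motzkin_level L"
  then obtain q s where z: "z = (q @ [-1], s)" "hd (q @ [-1]) = 0" "excursion q"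
      "well_labelled (q @ [-1]) s" "distinct s" "set s = L"
    by (auto simp: wl_motzkin_level_def wl_motzkin_def)
  then obtain q' where q: "q = 0 # q'"
    by (cases q) auto
  with z obtain x t where "s = x # t" "well_labelled (q' @ [-1]) t"
    by (auto simp: well_labelled_Cons_iff)
  with z q show "z \<in> (\<lambda>(x, (p, s)). (0 # p, x # s)) ` (SIGMA x:L. wl_motzkin (L - {x}))"
    by (auto simp: wl_motzkin_def intro!: image_eqI[where x = "(x, (q' @ [-1], t))"])
next
  fix z assume "z \<in> (\<lambda>(x, (p, s)). (0 # p, x # s)) ` (SIGMA x:L. wl_motzkin (L - {x}))"
  then obtain x q t where "z = (0 # q @ [-1], x # t)" "x \<in> L" "excursion q"
      "well_labelled (q @ [-1]) t" "distinct t" "set t = L - {x}"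
    by (auto simp: wl_motzkin_def)
  then show "z \<in> wl_motzkin_level L"
    by (cases t) (auto simp: wl_motzkin_level_def wl_motzkin_def labelled_step_def
        intro: exI[of _ "0 # q"])
qed

lemma card_wl_motzkin_level:
  assumes "finite L"
  shows "card (wl_motzkin_level L) = card L * num_wl_motzkin (card L - 1)"
proof -
  have "inj_on (\<lambda>(x, (p, s)). (0 # p, x # s)) (SIGMA x:L. wl_motzkin (L - {x}))"
    by (rule inj_onI) auto
  then have "card (wl_motzkin_level L) = card (SIGMA x:L. wl_motzkin (L - {x}))"
    unfolding wl_motzkin_level_eq by (rule card_image)
  also have "\<dots> = (\<Sum>x\<in>L. card (wl_motzkin (L - {x})))"
    using assms finite_wl_motzkin by (intro card_SigmaI) auto
  also have "\<dots> = card L * num_wl_motzkin (card L - 1)"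
    using assms by (simp add: card_wl_motzkin)
  finally show ?thesis .
qed

definition wl_motzkin_pairs ::
    "nat set \<Rightarrow> ((int list \<times> nat list) \<times> (int list \<times> nat list)) set" where
  "wl_motzkin_pairs L = (\<Union>X\<in>Pow L. wl_motzkin X \<times> wl_motzkin (L - X))"

definition wl_motzkin_pairs_less ::
    "nat set \<Rightarrow> ((int list \<times> nat list) \<times> (int list \<times> nat list)) set" where
  "wl_motzkin_pairs_less L = {(a, b) \<in> wl_motzkin_pairs L. hd (snd a) < hd (snd b)}"

lemma wl_motzkin_hd_label_mem: "x \<in> wl_motzkin X \<Longrightarrow> hd (snd x) \<in> X"
  using well_labelled_length[of "fst x" "snd x"]
  by (cases "snd x") (auto simp: wl_motzkin_def split: prod.splits)

lemma card_wl_motzkin_pairs: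
  assumes "finite L"
  shows "card (wl_motzkin_pairs L) =
    (\<Sum>X\<in>Pow L. num_wl_motzkin (card X) * num_wl_motzkin (card L - card X))"
proof -
  have labels: "X = Y" if "(p, s) \<in> wl_motzkin X" "(p, s) \<in> wl_motzkin Y" for p s X Y
    using that by (simp add: wl_motzkin_def)
  have "card (wl_motzkin_pairs L) = (\<Sum>X\<in>Pow L. card (wl_motzkin X \<times> wl_motzkin (L - X)))"
    unfolding wl_motzkin_pairs_def using assms
    by (intro card_UN_disjoint) (auto intro: finite_wl_motzkin finite_subset dest: labels)
  also have "\<dots> = (\<Sum>X\<in>Pow L. num_wl_motzkin (card X) * num_wl_motzkin (card L - card X))"
    using assms by (intro sum.cong refl)
      (auto simp: card_cartesian_product card_wl_motzkin card_Diff_subset finite_subset)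
  finally show ?thesis .
qed

lemma card_wl_motzkin_pairs_eq_double:
  assumes "finite L"
  shows "card (wl_motzkin_pairs L) = 2 * card (wl_motzkin_pairs_less L)"
proof -
  have swap_mem: "(b, a) \<in> wl_motzkin_pairs L" and hd_ne: "hd (snd a) \<noteq> hd (snd b)"
    if ab: "(a, b) \<in> wl_motzkin_pairs L" for a b
  proof -
    obtain X where X: "X \<subseteq> L" "a \<in> wl_motzkin X" "b \<in> wl_motzkin (L - X)"
      using ab by (auto simp: wl_motzkin_pairs_def)
    then have "L - (L - X) = X" by auto
    with X show "(b, a) \<in> wl_motzkin_pairs L"
      unfolding wl_motzkin_pairs_def by (intro UN_I[of "L - X"]) auto
    show "hd (snd a) \<noteq> hd (snd b)"
      using wl_motzkin_hd_label_mem[OF X(2)] wl_motzkin_hd_label_mem[OF X(3)] by auto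
  qed
  have "wl_motzkin_pairs L = wl_motzkin_pairs_less L \<union> prod.swap ` wl_motzkin_pairs_less L"
  proof (intro equalityI subsetI)
    fix z assume z: "z \<in> wl_motzkin_pairs L"
    obtain a b where ab: "z = (a, b)" by (cases z)
    show "z \<in> wl_motzkin_pairs_less L \<union> prod.swap ` wl_motzkin_pairs_less L"
    proof (cases "hd (snd a) < hd (snd b)")
      case True
      with z ab show ?thesis by (simp add: wl_motzkin_pairs_less_def)
    next
      case False
      with z ab have "(b, a) \<in> wl_motzkin_pairs_less L"
        using swap_mem hd_ne[of a b] by (auto simp: wl_motzkin_pairs_less_def)
      with ab show ?thesis by (auto intro: image_eqI[where x = "(b, a)"])
    qed
  qed (auto simp: wl_motzkin_pairs_less_def swap_mem)
  moreover have "wl_motzkin_pairs_less L \<inter> prod.swap ` wl_motzkin_pairs_less L = {}"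
    by (auto simp: wl_motzkin_pairs_less_def)
  moreover have "finite (wl_motzkin_pairs L)"
    using assms by (auto simp: wl_motzkin_pairs_def intro: finite_wl_motzkin finite_subset)
  ultimately have "card (wl_motzkin_pairs L) =
      card (wl_motzkin_pairs_less L) + card (prod.swap ` wl_motzkin_pairs_less L)"
    by (metis card_Un_disjoint finite_Un)
  then show ?thesis by (simp add: card_image)
qed

text \<open>Reading the first path backwards turns its final down step into the initial up step of
  the glued path; the down step at the junction is a descent exactly when the first label of the
  first path is smaller than that of the second.\<close>

fun glue :: "(int list \<times> nat list) \<times> (int list \<times> nat list) \<Rightarrow> int list \<times> nat list" where
  "glue ((p, s), (p', s')) = (reverse_walk p @ (-1) # p', rev s @ s')"

lemma glue_mem_wl_motzkin_rise:
  assumes "(a, b) \<in> wl_motzkin_pairs_less L"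
  shows "glue (a, b) \<in> wl_motzkin_rise L"
proof -
  obtain p s p' s' X where ab: "a = (p, s)" "b = (p', s')" and X: "X \<subseteq> L"
    and a: "(p, s) \<in> wl_motzkin X" and b: "(p', s') \<in> wl_motzkin (L - X)" and less: "hd s < hd s'"
    using assms by (cases a, cases b) (auto simp: wl_motzkin_pairs_less_def wl_motzkin_pairs_def)
  obtain q q' where q: "p = q @ [-1]" "excursion q" and q': "p' = q' @ [-1]" "excursion q'"
    using a b by (auto simp: wl_motzkin_def)
  have wl: "well_labelled p s" "well_labelled p' s'"
    using a b by (simp_all add: wl_motzkin_def)
  then have "s \<noteq> []" "length (rev s) = Suc (length (reverse_walk p))"
    using well_labelled_length by fastforce+
  then have "well_labelled (reverse_walk p @ (-1) # p') (rev s @ s')"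
    using wl well_labelled_reverse less
    by (simp add: well_labelled_append_iff last_rev labelled_step_def)
  moreover have "reverse_walk p @ (-1) # p' = (1 # reverse_walk q @ (-1) # q') @ [-1]"
    using q q' by simp
  moreover have "excursion (1 # reverse_walk q @ (-1) # q')"
    using q q' by (simp add: excursion_arch)
  moreover have "distinct (rev s @ s')" "set (rev s @ s') = L"
    using a b X by (auto simp: wl_motzkin_def)
  ultimately show ?thesis
    unfolding ab by (auto simp: wl_motzkin_rise_def wl_motzkin_def)
qed

lemma wl_motzkin_rise_subset_glue_image:
  "wl_motzkin_rise L \<subseteq> glue ` wl_motzkin_pairs_less L"
proof
  fix z assume "z \<in> wl_motzkin_rise L"
  then obtain w s where z: "z = ((1 # w) @ [-1], s)" "excursion (1 # w)"
      "well_labelled ((1 # w) @ [-1]) s" "distinct s" "set s = L"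
    by (auto simp: wl_motzkin_rise_def wl_motzkin_def neq_Nil_conv hd_append split: if_splits)
  moreover have "\<forall>c\<in>set w. -1 \<le> c"
    using well_labelled_steps[OF z(3)] by auto
  ultimately obtain r r' where r: "w = r @ (-1) # r'" "excursion r" "excursion r'"
    by (auto elim: excursion_arch_decompose)
  define k where "k = Suc (length (1 # r))"
  define s1 where "s1 = take k s"
  define s2 where "s2 = drop k s"
  have "length s1 = Suc (length (1 # r))"
    using well_labelled_length[OF z(3)] r by (simp add: s1_def k_def)
  moreover have "well_labelled ((1 # r) @ (-1) # (r' @ [-1])) (s1 @ s2)"
    using z(3) r by (simp add: s1_def s2_def)
  ultimately have "well_labelled (1 # r) s1" "well_labelled (r' @ [-1]) s2" "last s1 < hd s2"
    using well_labelled_append_iff[of s1 "1 # r" "-1" "r' @ [-1]" s2]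
    by (simp_all add: labelled_step_def)
  moreover have "s1 \<noteq> []" using well_labelled_length[of "1 # r" s1] calculation by auto
  moreover have "distinct (s1 @ s2)" "set (s1 @ s2) = L"
    using z by (simp_all add: s1_def s2_def)
  ultimately have "((reverse_walk (1 # r), rev s1), (r' @ [-1], s2)) \<in> wl_motzkin_pairs_less L"
    using r well_labelled_reverse[of "1 # r" s1]
    by (auto simp: wl_motzkin_pairs_less_def wl_motzkin_pairs_def wl_motzkin_def hd_rev
        intro!: UN_I[of "set s1"])
  moreover have "z = glue ((reverse_walk (1 # r), rev s1), (r' @ [-1], s2))"
    using z r by (simp add: s1_def s2_def)
  ultimately show "z \<in> glue ` wl_motzkin_pairs_less L" by blast
qed

lemma inj_on_glue: "inj_on glue (wl_motzkin_pairs L)"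
proof (rule inj_onI)
  fix x y assume x: "x \<in> wl_motzkin_pairs L" and y: "y \<in> wl_motzkin_pairs L"
    and eq: "glue x = glue y"
  obtain q s p' s' X where x': "x = ((q @ [-1], s), (p', s'))" "excursion q"
      "(q @ [-1], s) \<in> wl_motzkin X"
    using x by (auto simp: wl_motzkin_pairs_def wl_motzkin_def)
  obtain u t o' t' Y where y': "y = ((u @ [-1], t), (o', t'))" "excursion u"
      "(u @ [-1], t) \<in> wl_motzkin Y"
    using y by (auto simp: wl_motzkin_pairs_def wl_motzkin_def)
  have "reverse_walk q @ (-1) # p' = reverse_walk u @ (-1) # o'" "rev s @ s' = rev t @ t'"
    using eq x' y' by simp_all
  then have "q = u" "p' = o'"
    using excursion_first_return_unique[of "reverse_walk q" "reverse_walk u" p' o'] x' y'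
    by (auto dest: arg_cong[of _ _ reverse_walk])
  moreover have "length s = length t"
    using x' y' calculation by (auto simp: wl_motzkin_def dest!: well_labelled_length)
  ultimately show "x = y"
    using x' y' \<open>rev s @ s' = rev t @ t'\<close> by simp
qed

lemma card_wl_motzkin_rise: "card (wl_motzkin_rise L) = card (wl_motzkin_pairs_less L)"
proof -
  have "glue ` wl_motzkin_pairs_less L = wl_motzkin_rise L"
    using glue_mem_wl_motzkin_rise wl_motzkin_rise_subset_glue_image by fastforce
  moreover have "inj_on glue (wl_motzkin_pairs_less L)"
    using inj_on_glue by (rule inj_on_subset) (auto simp: wl_motzkin_pairs_less_def)
  ultimately show ?thesis using card_image by fastforce
qed

section \<open>The recurrence and the generating function\<close>

lemma sum_Pow_card:
  fixes g :: "nat \<Rightarrow> 'b::comm_semiring_1"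
  assumes "finite L"
  shows "(\<Sum>X\<in>Pow L. g (card X)) = (\<Sum>k=0..card L. of_nat (card L choose k) * g k)"
proof -
  have "(\<Sum>X\<in>Pow L. g (card X)) = (\<Sum>k=0..card L. \<Sum>X\<in>{X \<in> Pow L. card X = k}. g (card X))"
    using assms by (intro sum.group[symmetric]) (auto intro: card_mono)
  also have "\<dots> = (\<Sum>k=0..card L. of_nat (card L choose k) * g k)"
  proof (intro sum.cong refl)
    fix k
    have "{X \<in> Pow L. card X = k} = {X. X \<subseteq> L \<and> card X = k}" by auto
    then show "(\<Sum>X\<in>{X \<in> Pow L. card X = k}. g (card X)) = of_nat (card L choose k) * g k"
      using n_subsets[OF assms, of k] by simp
  qed
  finally show ?thesis .
qed

lemma num_wl_motzkin_recurrence_ge_3: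
  assumes "3 \<le> n"
  shows "2 * num_wl_motzkin n = 2 * n * num_wl_motzkin (n - 1) +
    (\<Sum>k=0..n. (n choose k) * (num_wl_motzkin k * num_wl_motzkin (n - k)))"
proof -
  let ?L = "{1..n}"
  have "num_wl_motzkin n = card (wl_motzkin_level ?L \<union> wl_motzkin_rise ?L)"
    using card_wl_motzkin[of ?L] wl_motzkin_eq_level_Un_rise[of ?L] assms by simp
  also have "\<dots> = card (wl_motzkin_level ?L) + card (wl_motzkin_rise ?L)"
    using finite_wl_motzkin[of ?L]
    by (intro card_Un_disjoint) (auto simp: wl_motzkin_level_def wl_motzkin_rise_def)
  finally have "num_wl_motzkin n = card (wl_motzkin_level ?L) + card (wl_motzkin_rise ?L)" .
  moreover have "card (wl_motzkin_level ?L) = n * num_wl_motzkin (n - 1)"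
    using card_wl_motzkin_level[of ?L] by simp
  moreover have "2 * card (wl_motzkin_rise ?L) =
      (\<Sum>k=0..n. (n choose k) * (num_wl_motzkin k * num_wl_motzkin (n - k)))"
    using card_wl_motzkin_pairs_eq_double[of ?L] card_wl_motzkin_pairs[of ?L]
      sum_Pow_card[of ?L "\<lambda>k. num_wl_motzkin k * num_wl_motzkin (n - k)"]
    by (simp add: card_wl_motzkin_rise)
  ultimately show ?thesis by simp
qed

lemma wl_motzkin_two: "wl_motzkin {1..2} = {([-1], [1, 2])}"
proof (intro equalityI subsetI)
  fix z assume z: "z \<in> wl_motzkin {1..2}"
  obtain p s where "z = (p, s)" by (cases z)
  with z have ps: "z = (p, s)" "(p, s) \<in> wl_motzkin {1..2}" by simp_all
  then have "length p = 1" using wl_motzkin_card_labels by fastforce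
  with ps obtain x y where "p = [-1]" "s = [x, y]" "x < y" "set [x, y] = {1..2}"
    by (auto simp: wl_motzkin_def well_labelled_Cons_iff well_labelled_Nil_iff
        labelled_step_def length_Suc_conv)
  moreover from this have "x \<in> {1..2}" "y \<in> {1..2}" by auto
  ultimately show "z \<in> {([-1], [1, 2])}" using ps by auto
qed (auto simp: wl_motzkin_def labelled_step_def excursion_def intro: exI[of _ "[]"])

lemma num_wl_motzkin_recurrence:
  "2 * num_wl_motzkin n = (if n = 2 then 2 else 0) + 2 * n * num_wl_motzkin (n - 1) +
    (\<Sum>k=0..n. (n choose k) * (num_wl_motzkin k * num_wl_motzkin (n - k)))"
proof (cases "3 \<le> n")
  case True
  then show ?thesis using num_wl_motzkin_recurrence_ge_3 by simp
next
  case False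
  have small: "num_wl_motzkin k = 0" if "k < 2" for k
    using that by (simp add: num_wl_motzkin_def)
  have "num_wl_motzkin k * num_wl_motzkin (n - k) = 0" for k
    using False small[of k] small[of "n - k"] by (cases "k < 2") auto
  moreover have "num_wl_motzkin 2 = 1"
    unfolding num_wl_motzkin_eq_card wl_motzkin_two by simp
  ultimately show ?thesis
    using False small[of n] small[of "n - 1"] by (cases "n = 2") auto
qed

lemma A_egf_nth_recurrence:
  "A_egf $ n = (if n = 2 then 1 / 2 else 0) + (if n = 0 then 0 else A_egf $ (n - 1)) +
    (\<Sum>k=0..n. A_egf $ k * A_egf $ (n - k)) / 2"
proof -
  let ?a = "\<lambda>k. real (num_wl_motzkin k)"
  have base: "real (if n = 2 then 2 else 0) / (2 * fact n) = (if n = 2 then 1 / 2 else (0::real))"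
    by (simp add: numeral_2_eq_2)
  have shift: "2 * real n * ?a (n - 1) / (2 * fact n) = (if n = 0 then 0 else A_egf $ (n - 1))"
    by (cases n) (simp_all add: A_egf_def del: of_nat_Suc)
  have convolution: "(\<Sum>k=0..n. real (n choose k) * (?a k * ?a (n - k))) / (2 * fact n) =
      (\<Sum>k=0..n. A_egf $ k * A_egf $ (n - k)) / 2"
    unfolding sum_divide_distrib
    by (intro sum.cong refl) (simp add: A_egf_def binomial_fact)
  have "A_egf $ n = real (2 * num_wl_motzkin n) / (2 * fact n)"
    by (simp add: A_egf_def)
  also have "\<dots> = (real (if n = 2 then 2 else 0) + 2 * real n * ?a (n - 1) +
      (\<Sum>k=0..n. real (n choose k) * (?a k * ?a (n - k)))) / (2 * fact n)"
    by (subst num_wl_motzkin_recurrence) simp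
  finally show ?thesis
    unfolding add_divide_distrib base shift convolution .
qed

theorem corollary1:
  shows "A_egf = fps_X ^ 2 / 2 + fps_X * A_egf + A_egf ^ 2 / 2"
proof (rule fps_ext)
  fix n
  have half: "(f / 2) $ n = f $ n / 2" for f :: "real fps"
    unfolding fps_numeral_fps_const divide_fps_const fps_mult_left_const_nth by simp
  have "(A_egf ^ 2) $ n = (\<Sum>k=0..n. A_egf $ k * A_egf $ (n - k))"
    by (simp add: power2_eq_square fps_mult_nth)
  then show "A_egf $ n = (fps_X ^ 2 / 2 + fps_X * A_egf + A_egf ^ 2 / 2) $ n"
    by (subst A_egf_nth_recurrence) (simp add: half fps_X_mult_nth fps_X_power_nth)
qed

end
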